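(* Let $(\mathfrak g,\{\cdot,\cdot\},E)$ be a pre-ENL algebra and let $L:\mathfrak g\to\mathfrak{gl}(\mathfrak g)$, $L(x)y=\{x,y\}$. Let $\{e_1,\dots,e_n\}$ be a basis of $\mathfrak g$ with dual basis $\{e_1^*,\dots,e_n^*\}$, and set $r:=\sum_{i=1}^n(e_i\otimes e_i^*-e_i^*\otimes e_i)\in(\mathfrak g\ltimes_{L^*}\mathfrak g^* )\otimes(\mathfrak g\ltimes_{L^*}\mathfrak g^* )$. Then $r$ is an EN $r$-matrix in the semidirect product ENL algebra $(\mathfrak g\ltimes_{L^*}\mathfrak g^*,E+E^* )$, i.e. $[\![r,r]\!]=0$ and $((E+E^* )\otimes\mathrm{Id}-\mathrm{Id}\otimes(E+E^* ))(r)=0$.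
   Context: All vector spaces are finite-dimensional over an algebraically closed field of characteristic zero. A pre-Lie algebra $(\mathfrak g,\{\cdot,\cdot\})$ is a vector space with bilinear product satisfying $\{\{x,y\},z\}-\{x,\{y,z\}\}=\{\{y,x\},z\}-\{y,\{x,z\}\}$; its induced (sub-adjacent) Lie bracket is $[x,y]_{\mathfrak g}=\{x,y\}-\{y,x\}$, and $L$ is a representation of this Lie algebra. A pre-ENL algebra $(\mathfrak g,\{\cdot,\cdot\},E)$ is a pre-Lie algebra with linear $E$ such that $E\{x,y\}=\{Ex,y\}=\{x,Ey\}$ for all $x,y$. The dual representation is $\langle L^*(x)\xi,y\rangle=-\langle\xi,L(x)y\rangle$, and $\mathfrak g\ltimes_{L^*}\mathfrak g^*$ is $\mathfrak g\oplus\mathfrak g^*$ with bracket $[x+\xi,y+\eta]=[x,y]_{\mathfrak g}+L^*(x)\eta-L^*(y)\xi$ and operator $(E+E^* )(x+\xi)=Ex+E^*\xi$, where $E^*$ is the dual map. For $r=\sum a_i\otimes b_i$, $[\![r,r]\!]=[r_{12},r_{13}]+[r_{13},r_{23}]+[r_{12},r_{23}]$ in the tensor cube of the universal enveloping algebra of $\mathfrak g\ltimes_{L^*}\mathfrak g^*$. *)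

theory Defs
  imports Main "HOL-Computational_Algebra.Polynomial" "HOL-Library.Function_Algebras"
begin

text \<open>The algebra g is the coordinate space 'n => 'a (for a finite index type 'n),
  its dual g* is also modelled as 'n => 'a via the standard pairing.\<close>

type_synonym ('n, 'a) vec = "'n \<Rightarrow> 'a"
type_synonym ('n, 'a) sd = "('n \<Rightarrow> 'a) \<times> ('n \<Rightarrow> 'a)"

definition algebraically_closed :: "'a::field itself \<Rightarrow> bool" where
  "algebraically_closed _ \<longleftrightarrow> (\<forall>p::'a poly. 0 < degree p \<longrightarrow> (\<exists>x. poly p x = 0))"

definition smul :: "'a::field \<Rightarrow> ('n \<Rightarrow> 'a) \<Rightarrow> ('n \<Rightarrow> 'a)" where
  "smul c x = (\<lambda>j. c * x j)"

definition unitv :: "'n \<Rightarrow> ('n \<Rightarrow> 'a::field)" where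
  "unitv j = (\<lambda>k. if k = j then 1 else 0)"

definition pairing :: "('n::finite \<Rightarrow> 'a::field) \<Rightarrow> ('n \<Rightarrow> 'a) \<Rightarrow> 'a" where
  "pairing xi y = (\<Sum>j\<in>UNIV. xi j * y j)"

definition is_linear :: "(('n \<Rightarrow> 'a::field) \<Rightarrow> ('n \<Rightarrow> 'a)) \<Rightarrow> bool" where
  "is_linear f \<longleftrightarrow> (\<forall>x y. f (x + y) = f x + f y) \<and> (\<forall>c x. f (smul c x) = smul c (f x))"

definition is_bilinear :: "(('n \<Rightarrow> 'a::field) \<Rightarrow> ('n \<Rightarrow> 'a) \<Rightarrow> ('n \<Rightarrow> 'a)) \<Rightarrow> bool" where
  "is_bilinear P \<longleftrightarrow>
     (\<forall>x y z. P (x + y) z = P x z + P y z) \<and> (\<forall>x y z. P x (y + z) = P x y + P x z) \<and>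
     (\<forall>c x y. P (smul c x) y = smul c (P x y)) \<and> (\<forall>c x y. P x (smul c y) = smul c (P x y))"

definition pre_Lie :: "(('n \<Rightarrow> 'a::field) \<Rightarrow> ('n \<Rightarrow> 'a) \<Rightarrow> ('n \<Rightarrow> 'a)) \<Rightarrow> bool" where
  "pre_Lie P \<longleftrightarrow> is_bilinear P \<and>
     (\<forall>x y z. P (P x y) z - P x (P y z) = P (P y x) z - P y (P x z))"

definition pre_ENL :: "(('n \<Rightarrow> 'a::field) \<Rightarrow> ('n \<Rightarrow> 'a) \<Rightarrow> ('n \<Rightarrow> 'a)) \<Rightarrow> (('n \<Rightarrow> 'a) \<Rightarrow> ('n \<Rightarrow> 'a)) \<Rightarrow> bool" where
  "pre_ENL P E \<longleftrightarrow> pre_Lie P \<and> is_linear E \<and>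
     (\<forall>x y. E (P x y) = P (E x) y \<and> P (E x) y = P x (E y))"

definition lie :: "(('n \<Rightarrow> 'a::field) \<Rightarrow> ('n \<Rightarrow> 'a) \<Rightarrow> ('n \<Rightarrow> 'a)) \<Rightarrow> ('n \<Rightarrow> 'a) \<Rightarrow> ('n \<Rightarrow> 'a) \<Rightarrow> ('n \<Rightarrow> 'a)" where
  "lie P x y = P x y - P y x"

text \<open>Dual representation L*: <L*(x) xi, y> = - <xi, L(x) y>, with L(x) y = {x,y}.\<close>
definition Lstar :: "(('n::finite \<Rightarrow> 'a::field) \<Rightarrow> ('n \<Rightarrow> 'a) \<Rightarrow> ('n \<Rightarrow> 'a)) \<Rightarrow> ('n \<Rightarrow> 'a) \<Rightarrow> ('n \<Rightarrow> 'a) \<Rightarrow> ('n \<Rightarrow> 'a)" where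
  "Lstar P x xi = (\<lambda>j. - pairing xi (P x (unitv j)))"

definition dualmap :: "(('n::finite \<Rightarrow> 'a::field) \<Rightarrow> ('n \<Rightarrow> 'a)) \<Rightarrow> ('n \<Rightarrow> 'a) \<Rightarrow> ('n \<Rightarrow> 'a)" where
  "dualmap E xi = (\<lambda>j. pairing xi (E (unitv j)))"

definition sd_bracket :: "(('n::finite \<Rightarrow> 'a::field) \<Rightarrow> ('n \<Rightarrow> 'a) \<Rightarrow> ('n \<Rightarrow> 'a)) \<Rightarrow> ('n,'a) sd \<Rightarrow> ('n,'a) sd \<Rightarrow> ('n,'a) sd" where
  "sd_bracket P u v = (lie P (fst u) (fst v), Lstar P (fst u) (snd v) - Lstar P (fst v) (snd u))"

definition sd_op :: "(('n::finite \<Rightarrow> 'a::field) \<Rightarrow> ('n \<Rightarrow> 'a)) \<Rightarrow> ('n,'a) sd \<Rightarrow> ('n,'a) sd" where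
  "sd_op E u = (E (fst u), dualmap E (snd u))"

definition coordV :: "('n,'a) sd \<Rightarrow> ('n + 'n) \<Rightarrow> 'a" where
  "coordV u p = (case p of Inl j \<Rightarrow> fst u j | Inr j \<Rightarrow> snd u j)"

definition basisV :: "('n + 'n) \<Rightarrow> ('n,'a::field) sd" where
  "basisV p = (case p of Inl j \<Rightarrow> (unitv j, 0) | Inr j \<Rightarrow> (0, unitv j))"

text \<open>Elements of V\<otimes>V and V\<otimes>V\<otimes>V are represented by their coordinate arrays.\<close>
type_synonym ('n, 'a) tensor2 = "('n + 'n) \<Rightarrow> ('n + 'n) \<Rightarrow> 'a"
type_synonym ('n, 'a) tensor3 = "('n + 'n) \<Rightarrow> ('n + 'n) \<Rightarrow> ('n + 'n) \<Rightarrow> 'a"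

definition tens :: "('n,'a::field) sd \<Rightarrow> ('n,'a) sd \<Rightarrow> ('n,'a) tensor2" where
  "tens u v = (\<lambda>p q. coordV u p * coordV v q)"

definition tens3 :: "('n,'a::field) sd \<Rightarrow> ('n,'a) sd \<Rightarrow> ('n,'a) sd \<Rightarrow> ('n,'a) tensor3" where
  "tens3 u v w = (\<lambda>p q s. coordV u p * coordV v q * coordV w s)"

definition tmap2 :: "(('n::finite,'a::field) sd \<Rightarrow> ('n,'a) sd) \<Rightarrow> (('n,'a) sd \<Rightarrow> ('n,'a) sd) \<Rightarrow> ('n,'a) tensor2 \<Rightarrow> ('n,'a) tensor2" where
  "tmap2 F G R = (\<lambda>p0 q0. \<Sum>p\<in>UNIV. \<Sum>q\<in>UNIV. R p q * tens (F (basisV p)) (G (basisV q)) p0 q0)"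

text \<open>[[r,r]] = [r12,r13] + [r13,r23] + [r12,r23] for r = \<Sum> R p q f_p \<otimes> f_q, i.e.
  \<Sum> R p q R s t ([f_p,f_s]\<otimes>f_q\<otimes>f_t + f_p\<otimes>f_s\<otimes>[f_q,f_t] + f_p\<otimes>[f_q,f_s]\<otimes>f_t).\<close>
definition CYB :: "(('n::finite,'a::field) sd \<Rightarrow> ('n,'a) sd \<Rightarrow> ('n,'a) sd) \<Rightarrow> ('n,'a) tensor2 \<Rightarrow> ('n,'a) tensor3" where
  "CYB br R = (\<lambda>p0 q0 s0. \<Sum>p\<in>UNIV. \<Sum>q\<in>UNIV. \<Sum>s\<in>UNIV. \<Sum>t\<in>UNIV. R p q * R s t *
      ( tens3 (br (basisV p) (basisV s)) (basisV q) (basisV t) p0 q0 s0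
      + tens3 (basisV p) (basisV s) (br (basisV q) (basisV t)) p0 q0 s0
      + tens3 (basisV p) (br (basisV q) (basisV s)) (basisV t) p0 q0 s0))"

end

theory Submission
  imports Defs "HOL-Analysis.Cartesian_Space"
begin

(* The relation <e_i^*, e_j> = delta_ij makes the coefficient matrix of the e_i^* a left, hence
   also a right, inverse of that of the e_i.  So r is the canonical element
   sum_j (u_j \<otimes> u^j - u^j \<otimes> u_j) of the standard basis u_j and its dual u^j, and both
   identities become coordinate computations for this element.  In [[r,r]] only the components
   with exactly one leg in g survive, and each of them is a coordinate of
   [x,y]_g - L(x)y + L(y)x, which vanishes because the bracket of g is the commutator of L
   (id is an O-operator of the sub-adjacent Lie algebra with respect to L).  The second identity
   says sum_j E u_j \<otimes> u^j = sum_i u_i \<otimes> E^* u^i, which is the definition of E^*. *)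

lemma is_bilinear_zero:
  assumes "is_bilinear P"
  shows "P x 0 = 0" "P 0 x = 0"
proof -
  have "P x (0 + 0) = P x 0 + P x 0" "P (0 + 0) x = P 0 x + P 0 x"
    using assms unfolding is_bilinear_def by blast+
  then show "P x 0 = 0" "P 0 x = 0" by simp_all
qed

lemma is_linear_zero:
  assumes "is_linear E"
  shows "E 0 = 0"
proof -
  have "E (0 + 0) = E 0 + E 0" using assms unfolding is_linear_def by blast
  then show ?thesis by simp
qed

lemma dual_basis_completeness:
  fixes e ed :: "'n::finite \<Rightarrow> 'n \<Rightarrow> 'a::field"
  assumes "\<forall>i j. pairing (ed i) (e j) = (if i = j then 1 else 0)"
  shows "(\<Sum>i\<in>UNIV. e i j * ed i k) = (if j = k then 1 else 0)"
proof -
  define A :: "'a^'n^'n" where "A = (\<chi> i k. ed i k)"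
  define B :: "'a^'n^'n" where "B = (\<chi> k j. e j k)"
  have "A ** B = mat 1"
    using assms by (simp add: A_def B_def matrix_matrix_mult_def mat_def vec_eq_iff pairing_def)
  then have "B ** A = mat 1" using matrix_left_right_inverse by blast
  then have "(B ** A) $ j $ k = mat 1 $ j $ k" by simp
  then show ?thesis by (simp add: A_def B_def matrix_matrix_mult_def mat_def)
qed

lemma sum_apply: "(\<Sum>i\<in>A. f i) x = (\<Sum>i\<in>A. f i x)"
  by (induct A rule: infinite_finite_induct) auto

lemma sum_UNIV_Plus:
  "(\<Sum>p\<in>(UNIV::('n::finite + 'm::finite) set). f p) = (\<Sum>j\<in>UNIV. f (Inl j)) + (\<Sum>k\<in>UNIV. f (Inr k))"
  by (subst UNIV_Plus_UNIV[symmetric], subst sum.Plus) (auto simp: comp_def)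

lemma if_zero_mult: "(if c then a else 0) * b = (if c then a * b else (0::'a::semiring_0))"
  by simp

lemma mult_if_zero: "b * (if c then a else 0) = (if c then b * a else (0::'a::semiring_0))"
  by simp

lemma sum_if_zero_const: "(\<Sum>x\<in>A. if c then f x else 0) = (if c then (\<Sum>x\<in>A. f x) else (0::'a::comm_monoid_add))"
  by simp

lemma pairing_unitv: "pairing (unitv j) v = v j"
  by (simp add: pairing_def unitv_def if_zero_mult)

lemma pairing_zero_left: "pairing 0 v = 0"
  by (simp add: pairing_def)

lemma coordV_Pair: "coordV (u, v) (Inl j) = u j" "coordV (u, v) (Inr j) = v j"
  by (simp_all add: coordV_def)

lemma coordV_basisV:
  "coordV (basisV (Inl a)) (Inl j) = (if j = a then 1 else 0)"
  "coordV (basisV (Inl a)) (Inr j) = 0"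
  "coordV (basisV (Inr a)) (Inl j) = 0"
  "coordV (basisV (Inr a)) (Inr j) = (if j = a then 1 else 0)"
  by (simp_all add: coordV_def basisV_def unitv_def)

lemma sd_bracket_basisV:
  assumes "is_bilinear P"
  shows "sd_bracket P (basisV (Inl a)) (basisV (Inl b)) = (lie P (unitv a) (unitv b), 0)"
    "sd_bracket P (basisV (Inl a)) (basisV (Inr b)) = (0, \<lambda>j. - P (unitv a) (unitv j) b)"
    "sd_bracket P (basisV (Inr a)) (basisV (Inl b)) = (0, \<lambda>j. P (unitv b) (unitv j) a)"
    "sd_bracket P (basisV (Inr a)) (basisV (Inr b)) = (0, 0)"
  by (auto simp: sd_bracket_def basisV_def lie_def Lstar_def is_bilinear_zero[OF assms]
      pairing_unitv pairing_zero_left fun_eq_iff)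

lemma sd_op_basisV:
  assumes "is_linear E"
  shows "sd_op E (basisV (Inl a)) = (E (unitv a), 0)"
    "sd_op E (basisV (Inr a)) = (0, \<lambda>k. E (unitv k) a)"
  by (auto simp: sd_op_def basisV_def dualmap_def pairing_unitv pairing_zero_left
      is_linear_zero[OF assms] fun_eq_iff)

definition canonical_r :: "('n, 'a::field) tensor2" where
  "canonical_r p q =
     (case (p, q) of
        (Inl j, Inr k) \<Rightarrow> if j = k then 1 else 0
      | (Inr j, Inl k) \<Rightarrow> if j = k then -1 else 0
      | _ \<Rightarrow> 0)"

lemma sum_canonical_r:
  "(\<Sum>p\<in>UNIV. \<Sum>q\<in>UNIV. canonical_r p q * X p q)
     = (\<Sum>j\<in>(UNIV::'n::finite set). X (Inl j) (Inr j)) - (\<Sum>j\<in>UNIV. (X (Inr j) (Inl j) :: 'a::field))"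
  by (simp add: sum_UNIV_Plus canonical_r_def sum_negf if_zero_mult)

lemma dual_basis_r_eq_canonical_r:
  fixes e ed :: "'n::finite \<Rightarrow> 'n \<Rightarrow> 'a::field"
  assumes "\<forall>i j. pairing (ed i) (e j) = (if i = j then 1 else 0)"
  shows "(\<Sum>i\<in>UNIV. tens (e i, 0) (0, ed i) - tens (0, ed i) (e i, 0)) = canonical_r"
proof (intro ext)
  fix p q
  have "(\<Sum>i\<in>UNIV. ed i k * e i j) = (if j = k then 1 else 0)" for j k
    using dual_basis_completeness[OF assms] by (simp add: mult.commute)
  then show "(\<Sum>i\<in>UNIV. tens (e i, 0) (0, ed i) - tens (0, ed i) (e i, 0)) p q = canonical_r p q"
    using dual_basis_completeness[OF assms]
    by (cases p; cases q) (simp_all add: sum_apply tens_def coordV_def canonical_r_def sum_subtractf)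
qed

lemma CYB_canonical_r:
  fixes P :: "('n::finite \<Rightarrow> 'a::field) \<Rightarrow> ('n \<Rightarrow> 'a) \<Rightarrow> ('n \<Rightarrow> 'a)"
  assumes "is_bilinear P"
  shows "CYB (sd_bracket P) canonical_r = 0"
proof (intro ext)
  fix p0 q0 s0
  show "CYB (sd_bracket P) canonical_r p0 q0 s0 = 0 p0 q0 s0"
    unfolding CYB_def mult.assoc sum_distrib_left[symmetric] sum_canonical_r
    by (cases p0; cases q0; cases s0;
        simp add: sd_bracket_basisV[OF assms] lie_def tens3_def coordV_Pair coordV_basisV
          if_zero_mult mult_if_zero sum_subtractf sum.distrib sum_if_zero_const sum_negf
          cong: if_cong)
qed

lemma tmap2_sd_op_canonical_r:
  fixes E :: "('n::finite \<Rightarrow> 'a::field) \<Rightarrow> ('n \<Rightarrow> 'a)"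
  assumes "is_linear E"
  shows "tmap2 (sd_op E) id canonical_r - tmap2 id (sd_op E) canonical_r = 0"
proof (intro ext)
  fix p0 q0
  show "(tmap2 (sd_op E) id canonical_r - tmap2 id (sd_op E) canonical_r) p0 q0 = 0 p0 q0"
    unfolding tmap2_def fun_diff_def sum_canonical_r
    by (cases p0; cases q0;
        simp add: sd_op_basisV[OF assms] tens_def coordV_Pair coordV_basisV
          if_zero_mult mult_if_zero sum_subtractf sum.distrib sum_if_zero_const sum_negf
          cong: if_cong)
qed

theorem theorem7p8:
  fixes P :: "('n::finite \<Rightarrow> 'a::field_char_0) \<Rightarrow> ('n \<Rightarrow> 'a) \<Rightarrow> ('n \<Rightarrow> 'a)"
    and E :: "('n \<Rightarrow> 'a) \<Rightarrow> ('n \<Rightarrow> 'a)"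
    and e ed :: "'n \<Rightarrow> ('n \<Rightarrow> 'a)"
  assumes alg_closed: "algebraically_closed TYPE('a)"
    and preENL: "pre_ENL P E"
    and basis_indep: "\<forall>c. (\<Sum>i\<in>UNIV. smul (c i) (e i)) = 0 \<longrightarrow> (\<forall>i. c i = 0)"
    and dual_basis: "\<forall>i j. pairing (ed i) (e j) = (if i = j then 1 else 0)"
  defines "r \<equiv> (\<Sum>i\<in>UNIV. tens (e i, 0) (0, ed i) - tens (0, ed i) (e i, 0))"
  shows "CYB (sd_bracket P) r = 0
       \<and> tmap2 (sd_op E) id r - tmap2 id (sd_op E) r = 0"
proof -
  have r: "r = canonical_r"
    unfolding r_def by (rule dual_basis_r_eq_canonical_r[OF dual_basis])
  have "is_bilinear P" and "is_linear E"
    using preENL unfolding pre_ENL_def pre_Lie_def by blast+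
  then show ?thesis
    unfolding r using CYB_canonical_r tmap2_sd_op_canonical_r by blast
qed

end
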